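(* For all binary words $\mathfrak{s},\mathfrak{t}$ over $\{\mathsf{A},\mathsf{B}\}$, \[ \mathsf{P}(\mathfrak{s}\circ\mathfrak{t}) = \mathsf{P}_{\mathsf{A}}(\mathfrak{s})\,\mathsf{P}^{\mathsf{B}}(\mathfrak{t}) + \mathsf{P}_{\mathsf{B}}(\mathfrak{s})\,\mathsf{P}^{\mathsf{A}}(\mathfrak{t}) - 1. \]
   Context: $\circ$ denotes concatenation. For a word $\mathfrak{s}$, $\mathsf{P}(\mathfrak{s})$ is the number of distinct words that are subsequences (not necessarily contiguous) of $\mathfrak{s}$, the empty word included. $\mathsf{P}^{\mathsf{A}}(\mathfrak{s})$ (resp. $\mathsf{P}^{\mathsf{B}}(\mathfrak{s})$) is the number of distinct subsequences of $\mathfrak{s}$ that start with $\mathsf{A}$ (resp. $\mathsf{B}$), plus one for the empty subsequence; $\mathsf{P}_{\mathsf{A}}(\mathfrak{s})$ (resp. $\mathsf{P}_{\mathsf{B}}(\mathfrak{s})$) is the number of distinct subsequences of $\mathfrak{s}$ that end with $\mathsf{A}$ (resp. $\mathsf{B}$), plus one for the empty subsequence. *)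

theory Defs
  imports Main
begin

datatype letter = A | B

definition subseqset :: "letter list \<Rightarrow> letter list set" where
  "subseqset s = set (subseqs s)"

definition P :: "letter list \<Rightarrow> nat" where
  "P s = card (subseqset s)"

text \<open>P^c(s): distinct subsequences starting with c, plus one (empty subsequence).\<close>
definition Pstart :: "letter \<Rightarrow> letter list \<Rightarrow> nat" where
  "Pstart c s = card {u \<in> subseqset s. u \<noteq> [] \<and> hd u = c} + 1"

text \<open>P_c(s): distinct subsequences ending with c, plus one (empty subsequence).\<close>
definition Pend :: "letter \<Rightarrow> letter list \<Rightarrow> nat" where
  "Pend c s = card {u \<in> subseqset s. u \<noteq> [] \<and> last u = c} + 1"

end

theory Submission
  imports Defs "HOL-Library.Sublist"
begin

text \<open>Induct on \<open>t\<close>, moving its first letter \<open>c\<close> to the end of \<open>s\<close>. The subsequences of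
  \<open>s c\<close> ending in \<open>c\<close> are exactly the subsequences of \<open>s\<close> followed by \<open>c\<close>, so
  \<open>P\<^sub>c(s c) = P(s) + 1\<close> while \<open>P\<^sub>d(s c) = P\<^sub>d(s)\<close> for the other letter \<open>d\<close>; dually
  \<open>P\<^sup>c(c t) = P(t) + 1\<close> and \<open>P\<^sup>d(c t) = P\<^sup>d(t)\<close>. Comparing the right-hand sides for
  \<open>(s, c t)\<close> and \<open>(s c, t)\<close>, the step then amounts to the two partitions
  \<open>P(s) = P\<^sub>A(s) + P\<^sub>B(s) - 1\<close> and \<open>P(t) = P\<^sup>A(t) + P\<^sup>B(t) - 1\<close> by last resp. first letter.
  All statements about first letters are obtained from those about last letters by reversal.\<close>

lemma set_subseqs_snoc:
  "set (subseqs (xs @ [x])) = set (subseqs xs) \<union> (\<lambda>u. u @ [x]) ` set (subseqs xs)"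
  by (induction xs) (auto simp: Let_def image_Un image_image)

lemma set_subseqs_rev: "set (subseqs (rev xs)) = rev ` set (subseqs xs)"
  by (induction xs) (auto simp: set_subseqs_snoc Let_def image_Un image_image)

lemma butlast_in_set_subseqs: "u \<in> set (subseqs xs) \<Longrightarrow> butlast u \<in> set (subseqs xs)"
  unfolding set_subseqs_eq mem_Collect_eq
  by (rule subseq_order.order_trans[OF prefix_imp_subseq[OF prefixeq_butlast]])

lemma finite_subseqset: "finite (subseqset s)"
  unfolding subseqset_def by (rule finite_set)

lemma P_rev: "P (rev s) = P s"
  by (simp add: P_def subseqset_def set_subseqs_rev card_image)

lemma Pstart_eq_Pend_rev: "Pstart c t = Pend c (rev t)"
proof -
  have "{u \<in> subseqset (rev t). u \<noteq> [] \<and> last u = c} = rev ` {u \<in> subseqset t. u \<noteq> [] \<and> hd u = c}"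
    unfolding subseqset_def set_subseqs_rev by (auto simp: last_rev)
  then show ?thesis
    by (simp add: Pstart_def Pend_def card_image)
qed

lemma P_eq_Pend_sum: "int (P s) = int (Pend A s) + int (Pend B s) - 1"
proof -
  let ?ends = "\<lambda>c. {u \<in> subseqset s. u \<noteq> [] \<and> last u = c}"
  have "u \<in> insert [] (?ends A \<union> ?ends B)" if "u \<in> subseqset s" for u
    using that by (cases "last u") auto
  moreover have "[] \<in> subseqset s"
    by (simp add: subseqset_def)
  ultimately have "subseqset s = insert [] (?ends A \<union> ?ends B)"
    by blast
  then have "P s = card (insert [] (?ends A \<union> ?ends B))"
    unfolding P_def by (rule arg_cong)
  also have "\<dots> = Suc (card (?ends A) + card (?ends B))"
    using finite_subseqset[of s] by (simp add: card_Un_disjoint disjoint_iff)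
  finally show ?thesis
    by (simp add: Pend_def)
qed

lemma P_eq_Pstart_sum: "int (P t) = int (Pstart A t) + int (Pstart B t) - 1"
  using P_eq_Pend_sum[of "rev t"] by (simp add: P_rev Pstart_eq_Pend_rev)

lemma Pend_snoc_same: "Pend c (s @ [c]) = P s + 1"
proof -
  have "{u \<in> subseqset (s @ [c]). u \<noteq> [] \<and> last u = c} = (\<lambda>u. u @ [c]) ` subseqset s"
  proof (intro equalityI subsetI)
    fix u assume "u \<in> {u \<in> subseqset (s @ [c]). u \<noteq> [] \<and> last u = c}"
    then have "u \<in> subseqset (s @ [c])" "u = butlast u @ [c]"
      by auto
    then show "u \<in> (\<lambda>u. u @ [c]) ` subseqset s"
      unfolding subseqset_def set_subseqs_snoc
      by (metis UnE butlast_in_set_subseqs image_iff)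
  qed (auto simp: subseqset_def set_subseqs_snoc)
  then show ?thesis
    by (simp add: Pend_def P_def card_image inj_on_def)
qed

lemma Pend_snoc_other: "d \<noteq> c \<Longrightarrow> Pend d (s @ [c]) = Pend d s"
  unfolding Pend_def subseqset_def set_subseqs_snoc by (auto intro!: arg_cong[where f = card])

lemma Pstart_Cons_same: "Pstart c (c # t) = P t + 1"
  by (simp add: Pstart_eq_Pend_rev Pend_snoc_same P_rev)

lemma Pstart_Cons_other: "d \<noteq> c \<Longrightarrow> Pstart d (c # t) = Pstart d t"
  by (simp add: Pstart_eq_Pend_rev Pend_snoc_other)

lemma Pstart_Nil: "Pstart c [] = 1"
  by (simp add: Pstart_def subseqset_def)

theorem theorem2:
  fixes s t :: "letter list"
  shows "int (P (s @ t)) = int (Pend A s) * int (Pstart B t) + int (Pend B s) * int (Pstart A t) - 1"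
proof (induction t arbitrary: s)
  case Nil
  show ?case
    using P_eq_Pend_sum[of s] by (simp add: Pstart_Nil)
next
  case (Cons c t)
  from Cons.IH[of "s @ [c]"] show ?case
    using P_eq_Pend_sum[of s] P_eq_Pstart_sum[of t]
    by (cases c) (simp_all add: Pend_snoc_same Pend_snoc_other Pstart_Cons_same
        Pstart_Cons_other algebra_simps)
qed

end
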